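(* Let $\Omega$ be a finite set, $K\ge1$, $A$ a symmetric real $|\Omega|\times|\Omega|$ matrix, $w\in\mathbb{R}^{\Omega}$ with $w_p>0$ for all $p$, and $W=\mathrm{diag}(w)$. For nonzero $X\in\{0,1\}^{\Omega}$ let $e(X)=-\frac{X'AX}{w'X}$ and $\nabla e(X)=w\frac{X'AX}{(w'X)^2}-AX\frac{2}{w'X}$. For labelings $S:\Omega\to\{1,\dots,K\}$ with all segments $S^k$ (identified with indicator vectors) nonempty let $E_A(S)=\sum_k e(S^k)$. Fix such a labeling $S_t$ and for $\delta\in\mathbb{R}$ define $$B_t(S,\delta)=\sum_{k}\nabla e(S^k_t)'S^k+\delta\sum_k\frac{(\mathbf{1}-2S^k_t)'WS^k}{w'S^k_t}.$$ Then for every $\delta\ge-\lambda_0(W^{-1/2}AW^{-1/2})$, where $\lambda_0$ denotes the smallest eigenvalue, $B_t(\cdot,\delta)+K\delta$ is an auxiliary function for $E_A$ at $S_t$; in particular $\{B_t(\cdot,\delta)+K\delta\}_{\delta\in\mathbb{R}}$ is a pseudo-bound for $E_A$ at $S_t$. Moreover, for any factors $c\in\mathcal{F}$ (subsets of $\Omega$), arbitrary real potentials $E_c(S_c)$ and $\gamma\in\mathbb{R}$, the same holds for $B_t(S,\delta)+K\delta+\gamma\sum_{c\in\mathcal{F}}E_c(S_c)$ with respect to the joint energy $E_A(S)+\gamma\sum_{c\in\mathcal{F}}E_c(S_c)$.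
   Context: An auxiliary function for $E$ at $S_t$ is a function $a$ with $E(S)\le a(S)$ for all admissible $S$ and $E(S_t)=a(S_t)$. A family $B(S,\delta)$ indexed by a real parameter $\delta$ is a pseudo-bound for $E$ at $S_t$ if there is at least one $\delta'$ for which $B(\cdot,\delta')$ is an auxiliary function for $E$ at $S_t$. $\mathbf{1}$ is the all-ones vector. *)

theory Defs
  imports "HOL-Analysis.Analysis"
begin

text \<open>Omega is the finite index type 'n; vectors in R^Omega are real^'n,
 matrices are real^'n^'n. Labels are natural numbers 1..K.\<close>

definition diag_mat :: "real^'n \<Rightarrow> real^'n^'n" where
  "diag_mat w = (\<chi> i j. if i = j then w $ i else 0)"

definition eigenvalues :: "real^'n^'n \<Rightarrow> real set" where
  "eigenvalues M = {l. \<exists>v. v \<noteq> 0 \<and> M *v v = l *\<^sub>R v}"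

definition lambda_min :: "real^'n^'n \<Rightarrow> real" where
  "lambda_min M = Min (eigenvalues M)"

definition seg :: "('n::finite \<Rightarrow> nat) \<Rightarrow> nat \<Rightarrow> real^'n" where
  "seg S k = (\<chi> p. if S p = k then 1 else 0)"

definition e_fun :: "real^'n^'n \<Rightarrow> real^'n \<Rightarrow> real^'n \<Rightarrow> real" where
  "e_fun A w X = - (X \<bullet> (A *v X)) / (w \<bullet> X)"

definition grad_e :: "real^'n^'n \<Rightarrow> real^'n \<Rightarrow> real^'n \<Rightarrow> real^'n" where
  "grad_e A w X = ((X \<bullet> (A *v X)) / (w \<bullet> X)^2) *\<^sub>R w - (2 / (w \<bullet> X)) *\<^sub>R (A *v X)"

definition admissible :: "nat \<Rightarrow> ('n::finite \<Rightarrow> nat) \<Rightarrow> bool" where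
  "admissible K S \<longleftrightarrow> (\<forall>p. S p \<in> {1..K}) \<and> (\<forall>k\<in>{1..K}. \<exists>p. S p = k)"

definition E_A :: "real^'n^'n \<Rightarrow> real^'n \<Rightarrow> nat \<Rightarrow> ('n::finite \<Rightarrow> nat) \<Rightarrow> real" where
  "E_A A w K S = (\<Sum>k=1..K. e_fun A w (seg S k))"

definition B_t :: "real^'n^'n \<Rightarrow> real^'n \<Rightarrow> nat \<Rightarrow> ('n::finite \<Rightarrow> nat)
    \<Rightarrow> ('n \<Rightarrow> nat) \<Rightarrow> real \<Rightarrow> real" where
  "B_t A w K St S \<delta> =
     (\<Sum>k=1..K. grad_e A w (seg St k) \<bullet> seg S k)
     + \<delta> * (\<Sum>k=1..K. ((vec 1 - 2 *\<^sub>R seg St k) \<bullet> (diag_mat w *v seg S k)) / (w \<bullet> seg St k))"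

definition auxiliary :: "nat \<Rightarrow> (('n::finite \<Rightarrow> nat) \<Rightarrow> real) \<Rightarrow> (('n \<Rightarrow> nat) \<Rightarrow> real)
    \<Rightarrow> ('n \<Rightarrow> nat) \<Rightarrow> bool" where
  "auxiliary K E a St \<longleftrightarrow> (\<forall>S. admissible K S \<longrightarrow> E S \<le> a S) \<and> E St = a St"

definition pseudo_bound :: "nat \<Rightarrow> (('n::finite \<Rightarrow> nat) \<Rightarrow> real) \<Rightarrow> (('n \<Rightarrow> nat) \<Rightarrow> real \<Rightarrow> real)
    \<Rightarrow> ('n \<Rightarrow> nat) \<Rightarrow> bool" where
  "pseudo_bound K E B St \<longleftrightarrow> (\<exists>\<delta>'. auxiliary K E (\<lambda>S. B S \<delta>') St)"

end

(* For indicator vectors X, Y with a = w'X > 0 and b = w'Y > 0, the linearisation of e at Y,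
   corrected by the term with \<delta>, exceeds e(X) by exactly a * Q(X/a - Y/b), where
   Q(Z) = Z'AZ + \<delta> Z'WZ.  Writing Z = W^(-1/2) v turns Q into v'(W^(-1/2) A W^(-1/2))v + \<delta> v'v,
   which is nonnegative as soon as \<delta> is at least minus the least eigenvalue.  So every segment
   term of B_t + K\<delta> dominates the corresponding term of E_A, with equality at S_t, where
   X = Y.  Adding the same function to both the energy and the bound preserves this. *)

theory Submission
  imports Defs
begin

lemma inner_matrix_vector_symmetric:
  fixes M :: "real^'n::finite^'n"
  assumes "transpose M = M"
  shows "x \<bullet> (M *v y) = y \<bullet> (M *v x)"
  by (metis assms dot_lmul_matrix inner_commute transpose_matrix_vector)

text \<open>Eigenvectors of distinct eigenvalues are orthogonal, hence linearly independent.\<close>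
lemma finite_eigenvalues_symmetric:
  fixes M :: "real^'n::finite^'n"
  assumes sym: "transpose M = M"
  shows "finite (eigenvalues M)"
proof -
  define g where "g l = (SOME v. v \<noteq> 0 \<and> M *v v = l *\<^sub>R v)" for l
  have g: "g l \<noteq> 0 \<and> M *v g l = l *\<^sub>R g l" if "l \<in> eigenvalues M" for l
  proof -
    have "\<exists>v. v \<noteq> 0 \<and> M *v v = l *\<^sub>R v" using that by (simp add: eigenvalues_def)
    then show ?thesis unfolding g_def by (rule someI_ex)
  qed
  have inj: "inj_on g (eigenvalues M)"
  proof (rule inj_onI)
    fix a b assume a: "a \<in> eigenvalues M" and b: "b \<in> eigenvalues M" and "g a = g b"
    then have "a *\<^sub>R g a = b *\<^sub>R g a" using g[OF a] g[OF b] by metis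
    then have "(a - b) *\<^sub>R g a = 0" by (simp add: algebra_simps)
    then show "a = b" using g[OF a] by simp
  qed
  have "pairwise orthogonal (g ` eigenvalues M)"
    unfolding pairwise_def
  proof clarify
    fix a b assume a: "a \<in> eigenvalues M" and b: "b \<in> eigenvalues M" and "g a \<noteq> g b"
    then have "a \<noteq> b" by auto
    have "a * (g b \<bullet> g a) = g b \<bullet> (M *v g a)" using g[OF a] by simp
    also have "\<dots> = g a \<bullet> (M *v g b)" by (rule inner_matrix_vector_symmetric[OF sym])
    also have "\<dots> = b * (g a \<bullet> g b)" using g[OF b] by simp
    finally have "(a - b) * (g a \<bullet> g b) = 0" by (simp add: inner_commute algebra_simps)
    then show "orthogonal (g a) (g b)" using \<open>a \<noteq> b\<close> by (simp add: orthogonal_def)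
  qed
  moreover have "0 \<notin> g ` eigenvalues M" using g by auto
  ultimately have "independent (g ` eigenvalues M)"
    using pairwise_orthogonal_independent by blast
  then have "finite (g ` eigenvalues M)" by (rule independent_imp_finite)
  then show ?thesis using finite_imageD inj by blast
qed

lemma nonneg_linear_plus_quadratic_imp_zero:
  fixes a b :: real
  assumes "a \<ge> 0" and "\<And>t. 2 * t * a + t\<^sup>2 * b \<ge> 0"
  shows "a = 0"
proof (rule ccontr)
  assume "a \<noteq> 0"
  then have "a > 0" using assms(1) by simp
  define s where "s = 1 / (\<bar>b\<bar> + 1)"
  have "s > 0" and "s * b < 1" unfolding s_def by (simp_all add: field_simps abs_if)
  have "2 * (- a * s) * a + (- a * s)\<^sup>2 * b = a * a * s * (s * b - 2)"
    by (simp add: power2_eq_square algebra_simps)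
  also have "\<dots> < 0" using \<open>a > 0\<close> \<open>s > 0\<close> \<open>s * b < 1\<close> by (simp add: mult_pos_neg)
  finally show False using assms(2)[of "- a * s"] by linarith
qed

text \<open>The minimum of the quadratic form on the unit sphere is an eigenvalue: a minimiser
  \<open>v\<^sub>0\<close> has vanishing residual \<open>M v\<^sub>0 - \<mu> v\<^sub>0\<close>, since moving along the residual
  would otherwise decrease the Rayleigh quotient to first order.\<close>
lemma symmetric_matrix_least_eigenvalue_exists:
  fixes M :: "real^'n::finite^'n"
  assumes sym: "transpose M = M"
  shows "\<exists>\<mu>\<in>eigenvalues M. \<forall>v. \<mu> * (v \<bullet> v) \<le> v \<bullet> (M *v v)"
proof -
  let ?q = "\<lambda>v. v \<bullet> (M *v v)"
  have "continuous_on (sphere 0 1) ?q"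
    by (intro continuous_intros linear_continuous_on) (simp add: linear_continuous_on)
  moreover have "sphere (0::real^'n) 1 \<noteq> {}" by simp
  ultimately obtain v0 where v0: "v0 \<in> sphere 0 1" and least: "\<And>y. y \<in> sphere 0 1 \<Longrightarrow> ?q v0 \<le> ?q y"
    using continuous_attains_inf[OF compact_sphere] by blast
  define \<mu> where "\<mu> = ?q v0"
  have unit: "v0 \<bullet> v0 = 1" using v0 by (simp add: dot_square_norm)
  have bound: "\<mu> * (v \<bullet> v) \<le> ?q v" for v
  proof (cases "v = 0")
    case False
    define u where "u = (1 / norm v) *\<^sub>R v"
    have "u \<in> sphere 0 1" using False unfolding u_def by simp
    then have "\<mu> \<le> ?q u" using least unfolding \<mu>_def by blast
    moreover have "?q v = (norm v)\<^sup>2 * ?q u" "v \<bullet> v = (norm v)\<^sup>2"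
      using False unfolding u_def
      by (simp_all add: matrix_vector_mult_scaleR power2_eq_square dot_square_norm)
    ultimately show ?thesis by (metis mult.commute mult_right_mono zero_le_power2)
  qed simp
  define r where "r = M *v v0 - \<mu> *\<^sub>R v0"
  have "2 * t * (r \<bullet> r) + t\<^sup>2 * (?q r - \<mu> * (r \<bullet> r)) \<ge> 0" for t
  proof -
    have h: "\<mu> * ((v0 + t *\<^sub>R r) \<bullet> (v0 + t *\<^sub>R r)) \<le> ?q (v0 + t *\<^sub>R r)" by (rule bound)
    have s: "v0 \<bullet> (M *v r) = r \<bullet> (M *v v0)" by (rule inner_matrix_vector_symmetric[OF sym])
    have "r \<bullet> (M *v v0) = r \<bullet> r + \<mu> * (r \<bullet> v0)"
      unfolding r_def by (simp add: inner_diff_right)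
    then have e: "t * (2 * (r \<bullet> (M *v v0))) = t * (r \<bullet> r * 2) + t * (r \<bullet> v0 * (2 * \<mu>))"
      by (simp add: algebra_simps)
    have "t * (t * (r \<bullet> r * \<mu>)) + t * (r \<bullet> v0 * (2 * \<mu>))
        \<le> t * (t * (r \<bullet> (M *v r))) + t * (2 * (r \<bullet> (M *v v0)))"
      using h s unit
      by (simp add: algebra_simps inner_add_left inner_add_right matrix_vector_right_distrib
          matrix_vector_mult_scaleR power2_eq_square inner_commute \<mu>_def)
    then show ?thesis using e by (simp add: algebra_simps power2_eq_square)
  qed
  then have "r \<bullet> r = 0" by (intro nonneg_linear_plus_quadratic_imp_zero) auto
  then have "M *v v0 = \<mu> *\<^sub>R v0" unfolding r_def by simp
  moreover have "v0 \<noteq> 0" using v0 by auto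
  ultimately have "\<mu> \<in> eigenvalues M" unfolding eigenvalues_def by blast
  with bound show ?thesis by blast
qed

lemma lambda_min_le_quadratic_form:
  fixes M :: "real^'n::finite^'n"
  assumes sym: "transpose M = M"
  shows "lambda_min M * (v \<bullet> v) \<le> v \<bullet> (M *v v)"
proof -
  obtain \<mu> where \<mu>: "\<mu> \<in> eigenvalues M" "\<And>v. \<mu> * (v \<bullet> v) \<le> v \<bullet> (M *v v)"
    using symmetric_matrix_least_eigenvalue_exists[OF sym] by blast
  have "lambda_min M \<le> \<mu>"
    unfolding lambda_min_def using finite_eigenvalues_symmetric[OF sym] \<mu>(1) by simp
  then have "lambda_min M * (v \<bullet> v) \<le> \<mu> * (v \<bullet> v)" by (simp add: mult_right_mono)
  with \<mu>(2)[of v] show ?thesis by linarith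
qed

lemma diag_mat_mult_vector: "diag_mat w *v x = (\<chi> p. w $ p * x $ p)"
proof -
  have "(\<Sum>j\<in>UNIV. (if p = j then w $ p else 0) * x $ j) = w $ p * x $ p" for p
    by (simp add: if_distrib[of "\<lambda>c. c * _"] cong: if_cong)
  then show ?thesis by (simp add: diag_mat_def matrix_vector_mult_def vec_eq_iff)
qed

lemma transpose_diag_mat: "transpose (diag_mat w) = diag_mat w"
  by (simp add: diag_mat_def transpose_def vec_eq_iff)

lemma inner_vec_1_diag_mat: "vec 1 \<bullet> (diag_mat w *v x) = w \<bullet> x"
  by (simp add: diag_mat_mult_vector inner_vec_def)

lemma inner_diag_mat_indicator:
  assumes "\<forall>p. U $ p = 0 \<or> U $ p = 1"
  shows "U \<bullet> (diag_mat w *v U) = w \<bullet> U"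
  unfolding diag_mat_mult_vector inner_vec_def
  by (rule sum.cong) (use assms in \<open>auto simp: vec_eq_iff\<close>)

definition shifted_form :: "real^'n^'n \<Rightarrow> real^'n \<Rightarrow> real \<Rightarrow> real^'n \<Rightarrow> real" where
  "shifted_form A w \<delta> Z = Z \<bullet> (A *v Z) + \<delta> * (Z \<bullet> (diag_mat w *v Z))"

lemma shifted_form_nonneg:
  fixes A :: "real^'n::finite^'n" and w :: "real^'n"
  assumes symA: "transpose A = A" and wpos: "\<forall>p. w $ p > 0"
    and \<delta>: "\<delta> \<ge> - lambda_min (diag_mat (\<chi> p. 1 / sqrt (w $ p)) ** A ** diag_mat (\<chi> p. 1 / sqrt (w $ p)))"
  shows "0 \<le> shifted_form A w \<delta> Z"
proof -
  define D where "D = diag_mat (\<chi> p. 1 / sqrt (w $ p))"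
  \<comment> \<open>\<open>v = W\<^sup>1\<^sup>/\<^sup>2 Z\<close>, so that \<open>Z = D v\<close> and \<open>Z'WZ = v'v\<close>\<close>
  define v where "v = (\<chi> p. sqrt (w $ p) * Z $ p)"
  have symM: "transpose (D ** A ** D) = D ** A ** D"
    by (simp add: D_def matrix_transpose_mul transpose_diag_mat symA matrix_mul_assoc)
  have Dv: "D *v v = Z"
    using wpos by (simp add: D_def v_def diag_mat_mult_vector vec_eq_iff less_imp_neq[symmetric])
  have "v \<bullet> ((D ** A ** D) *v v) = v \<bullet> (D *v (A *v (D *v v)))"
    by (simp add: matrix_vector_mul_assoc matrix_mul_assoc)
  also have "\<dots> = (A *v (D *v v)) \<bullet> (D *v v)"
    unfolding D_def by (rule inner_matrix_vector_symmetric[OF transpose_diag_mat])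
  finally have vMv: "v \<bullet> ((D ** A ** D) *v v) = Z \<bullet> (A *v Z)"
    by (simp add: Dv inner_commute)
  have vv: "v \<bullet> v = Z \<bullet> (diag_mat w *v Z)"
    unfolding v_def diag_mat_mult_vector inner_vec_def
    by (rule sum.cong) (use wpos in \<open>auto simp: less_imp_le power2_eq_square[symmetric] power_mult_distrib\<close>)
  have "0 \<le> (lambda_min (D ** A ** D) + \<delta>) * (v \<bullet> v)"
    using \<delta> unfolding D_def by simp
  also have "\<dots> \<le> shifted_form A w \<delta> Z"
    using lambda_min_le_quadratic_form[OF symM, of v]
    by (simp add: shifted_form_def vMv vv algebra_simps)
  finally show ?thesis .
qed

lemma linearization_gap:
  fixes A :: "real^'n::finite^'n" and w X Y :: "real^'n"
  assumes symA: "transpose A = A"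
    and X01: "\<forall>p. X $ p = 0 \<or> X $ p = 1" and Y01: "\<forall>p. Y $ p = 0 \<or> Y $ p = 1"
    and a: "w \<bullet> X \<noteq> 0" and b: "w \<bullet> Y \<noteq> 0"
  shows "grad_e A w Y \<bullet> X + \<delta> * (((vec 1 - 2 *\<^sub>R Y) \<bullet> (diag_mat w *v X)) / (w \<bullet> Y)) + \<delta>
           - e_fun A w X
         = (w \<bullet> X) * shifted_form A w \<delta> ((1 / (w \<bullet> X)) *\<^sub>R X - (1 / (w \<bullet> Y)) *\<^sub>R Y)"
proof -
  define a' b' where "a' = w \<bullet> X" and "b' = w \<bullet> Y"
  define qX qY where "qX = X \<bullet> (A *v X)" and "qY = Y \<bullet> (A *v Y)"
  define c d where "c = X \<bullet> (A *v Y)" and "d = Y \<bullet> (diag_mat w *v X)"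
  define Z where "Z = (1 / a') *\<^sub>R X - (1 / b') *\<^sub>R Y"
  have "a' \<noteq> 0" "b' \<noteq> 0" using a b by (simp_all add: a'_def b'_def)
  have c': "Y \<bullet> (A *v X) = c"
    unfolding c_def by (rule inner_matrix_vector_symmetric[OF symA])
  have d': "X \<bullet> (diag_mat w *v Y) = d"
    unfolding d_def by (rule inner_matrix_vector_symmetric[OF transpose_diag_mat])
  have ZAZ: "Z \<bullet> (A *v Z) = qX / a'\<^sup>2 - 2 * c / (a' * b') + qY / b'\<^sup>2"
    unfolding Z_def using c' \<open>a' \<noteq> 0\<close> \<open>b' \<noteq> 0\<close>
    by (simp add: inner_diff_left inner_diff_right matrix_vector_mult_diff_distrib
        matrix_vector_mult_scaleR qX_def qY_def c_def power2_eq_square field_simps)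
  have ZWZ: "Z \<bullet> (diag_mat w *v Z) = 1 / a' - 2 * d / (a' * b') + 1 / b'"
    unfolding Z_def using d' inner_diag_mat_indicator[OF X01] inner_diag_mat_indicator[OF Y01]
      \<open>a' \<noteq> 0\<close> \<open>b' \<noteq> 0\<close>
    by (simp add: inner_diff_left inner_diff_right matrix_vector_mult_diff_distrib
        matrix_vector_mult_scaleR a'_def b'_def d_def power2_eq_square field_simps)
  have grad: "grad_e A w Y \<bullet> X = qY / b'\<^sup>2 * a' - 2 / b' * c"
    unfolding grad_e_def qY_def b'_def a'_def c_def
    by (simp add: inner_diff_left inner_diff_right inner_commute)
  have weight: "(vec 1 - 2 *\<^sub>R Y) \<bullet> (diag_mat w *v X) = a' - 2 * d"
    unfolding a'_def d_def using inner_vec_1_diag_mat[of w X] by (simp add: inner_diff_left)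
  show ?thesis
    unfolding shifted_form_def e_fun_def grad weight
    unfolding a'_def[symmetric] b'_def[symmetric] qX_def[symmetric] Z_def[symmetric] ZAZ ZWZ
    using \<open>a' \<noteq> 0\<close> \<open>b' \<noteq> 0\<close> by (simp add: field_simps power2_eq_square)
qed

lemma seg_indicator: "\<forall>p. seg S k $ p = 0 \<or> seg S k $ p = 1"
  by (simp add: seg_def)

lemma inner_seg_pos:
  assumes wpos: "\<forall>p. w $ p > 0" and "S p0 = k"
  shows "w \<bullet> seg S k > 0"
proof -
  have "w \<bullet> seg S k = (\<Sum>p\<in>UNIV. if S p = k then w $ p else 0)"
    unfolding inner_vec_def seg_def by (intro sum.cong) auto
  also have "\<dots> \<ge> (if S p0 = k then w $ p0 else 0)"
    by (rule member_le_sum) (use wpos in \<open>auto simp: less_imp_le\<close>)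
  moreover have "w $ p0 > 0" using wpos by blast
  ultimately show ?thesis using \<open>S p0 = k\<close> by simp
qed

lemma admissible_inner_seg_pos:
  assumes "\<forall>p. w $ p > 0" and "admissible K S" and "k \<in> {1..K}"
  shows "w \<bullet> seg S k > 0"
  using assms inner_seg_pos unfolding admissible_def by metis

lemma auxiliary_E_A:
  fixes A :: "real^'n::finite^'n" and w :: "real^'n"
  assumes symA: "transpose A = A" and wpos: "\<forall>p. w $ p > 0" and adm: "admissible K St"
    and nonneg: "\<And>Z. 0 \<le> shifted_form A w \<delta> Z"
  shows "auxiliary K (E_A A w K) (\<lambda>S. B_t A w K St S \<delta> + real K * \<delta>) St"
proof -
  define lin where "lin S k = grad_e A w (seg St k) \<bullet> seg S k
    + \<delta> * (((vec 1 - 2 *\<^sub>R seg St k) \<bullet> (diag_mat w *v seg S k)) / (w \<bullet> seg St k)) + \<delta>"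
    for S :: "'n \<Rightarrow> nat" and k
  have B: "B_t A w K St S \<delta> + real K * \<delta> = (\<Sum>k=1..K. lin S k)" for S
    by (simp add: B_t_def lin_def sum.distrib sum_distrib_left)
  have gap: "lin S k - e_fun A w (seg S k) = (w \<bullet> seg S k) * shifted_form A w \<delta>
      ((1 / (w \<bullet> seg S k)) *\<^sub>R seg S k - (1 / (w \<bullet> seg St k)) *\<^sub>R seg St k)"
    if "admissible K S" "k \<in> {1..K}" for S :: "'n \<Rightarrow> nat" and k
    unfolding lin_def using admissible_inner_seg_pos[OF wpos that] admissible_inner_seg_pos[OF wpos adm that(2)]
    by (intro linearization_gap[OF symA seg_indicator seg_indicator]) auto
  show ?thesis
    unfolding auxiliary_def E_A_def B
  proof (intro conjI allI impI)
    fix S :: "'n \<Rightarrow> nat" assume "admissible K S"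
    show "(\<Sum>k=1..K. e_fun A w (seg S k)) \<le> (\<Sum>k=1..K. lin S k)"
    proof (rule sum_mono)
      fix k assume k: "k \<in> {1..K}"
      have "0 \<le> (w \<bullet> seg S k) * shifted_form A w \<delta>
          ((1 / (w \<bullet> seg S k)) *\<^sub>R seg S k - (1 / (w \<bullet> seg St k)) *\<^sub>R seg St k)"
        using admissible_inner_seg_pos[OF wpos \<open>admissible K S\<close> k] nonneg by simp
      then show "e_fun A w (seg S k) \<le> lin S k" using gap[OF \<open>admissible K S\<close> k] by linarith
    qed
  next
    have "lin St k = e_fun A w (seg St k)" if "k \<in> {1..K}" for k
      using gap[OF adm that] by (simp add: shifted_form_def)
    then show "(\<Sum>k=1..K. e_fun A w (seg St k)) = (\<Sum>k=1..K. lin St k)" by simp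
  qed
qed

lemma auxiliary_add:
  assumes "auxiliary K E a St"
  shows "auxiliary K (\<lambda>S. E S + g S) (\<lambda>S. a S + g S) St"
  using assms unfolding auxiliary_def by auto

theorem theorem4:
  fixes A :: "real^'n::finite^'n" and w :: "real^'n" and K :: nat
    and St :: "'n \<Rightarrow> nat"
    and F :: "'n set set" and Ec :: "'n set \<Rightarrow> ('n \<Rightarrow> nat) \<Rightarrow> real" and \<gamma> :: real
  assumes "K \<ge> 1"
    and "transpose A = A"
    and "\<forall>p. w $ p > 0"
    and "admissible K St"
  defines "M \<equiv> diag_mat (\<chi> p. 1 / sqrt (w $ p)) ** A ** diag_mat (\<chi> p. 1 / sqrt (w $ p))"
  defines "J \<equiv> (\<lambda>S. E_A A w K S + \<gamma> * (\<Sum>c\<in>F. Ec c (restrict S c)))"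
  shows "(\<forall>\<delta>. \<delta> \<ge> - lambda_min M \<longrightarrow>
            auxiliary K (E_A A w K) (\<lambda>S. B_t A w K St S \<delta> + real K * \<delta>) St)
       \<and> pseudo_bound K (E_A A w K) (\<lambda>S \<delta>. B_t A w K St S \<delta> + real K * \<delta>) St
       \<and> (\<forall>\<delta>. \<delta> \<ge> - lambda_min M \<longrightarrow>
            auxiliary K J (\<lambda>S. B_t A w K St S \<delta> + real K * \<delta>
                             + \<gamma> * (\<Sum>c\<in>F. Ec c (restrict S c))) St)
       \<and> pseudo_bound K J (\<lambda>S \<delta>. B_t A w K St S \<delta> + real K * \<delta>
                             + \<gamma> * (\<Sum>c\<in>F. Ec c (restrict S c))) St"
proof -
  have aux: "auxiliary K (E_A A w K) (\<lambda>S. B_t A w K St S \<delta> + real K * \<delta>) St"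
    if "\<delta> \<ge> - lambda_min M" for \<delta>
    using auxiliary_E_A[OF assms(2-4) shifted_form_nonneg[OF assms(2,3)]] that
    unfolding M_def by blast
  have aux_joint: "auxiliary K J (\<lambda>S. B_t A w K St S \<delta> + real K * \<delta>
      + \<gamma> * (\<Sum>c\<in>F. Ec c (restrict S c))) St" if "\<delta> \<ge> - lambda_min M" for \<delta>
    unfolding J_def by (rule auxiliary_add[OF aux[OF that]])
  show ?thesis
    unfolding pseudo_bound_def using aux aux_joint by blast
qed

end
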